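(* Let $b\in B$, $i\in I$, $m=\varphi_i(b)$, $\xi\in P$, $j\ge0$, $n\ge0$ and $0\le t\le s\le m$. Suppose $p\in\mathcal P_j(\tilde f_i^sb,\xi)$ and $\tilde e_i^{\,n}p\in\mathcal P_j(\tilde f_i^tb,\xi+(n+t-s)\alpha_i)$. Then $$E(\tilde e_i^{\,n}p)=E(p)+\bigl((j+1)(s-t)-n\bigr)\delta_{0i}.$$
   Context: $\mathfrak g$ is an affine Kac–Moody algebra with index set $I$ ($0$ the special node), Cartan matrix $(a_{ij})$, simple coroots $h_i$, fundamental weights $\Lambda_i$, null root $\delta$. $P=\bigoplus_{i\in I}\mathbb Z\Lambda_i\oplus\mathbb Z\delta$, $P_{cl}=\bigoplus_{i\in I}\mathbb Z\Lambda_i$, $cl:P\to P_{cl}$ the projection killing $\delta$; $\alpha_i=\sum_ja_{ji}\Lambda_j+\delta_{i0}\delta$. $B$ is a finite crystal with $wt:B\to P_{cl}$, Kashiwara operators $\tilde e_i,\tilde f_i$, $\varepsilon_i(b)=\max\{k:\tilde e_i^kb\ne0\}$, $\varphi_i(b)=\max\{k:\tilde f_i^kb\ne0\}$. Tensor products: $wt$ is additive; $\tilde e_i(b_1\otimes b_2)=\tilde e_ib_1\otimes b_2$ if $\varphi_i(b_1)\ge\varepsilon_i(b_2)$ and $=b_1\otimes\tilde e_ib_2$ otherwise; $\tilde f_i(b_1\otimes b_2)=\tilde f_ib_1\otimes b_2$ if $\varphi_i(b_1)>\varepsilon_i(b_2)$ and $=b_1\otimes\tilde f_ib_2$ otherwise.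 An energy function is $H:B\otimes B\to\mathbb Z$ such that whenever $\tilde e_i(b\otimes b')\neq0$: $H(\tilde e_i(b\otimes b'))=H(b\otimes b')$ if $i\ne0$; $=H(b\otimes b')+1$ if $i=0$ and $\varphi_0(b)\ge\varepsilon_0(b')$; $=H(b\otimes b')-1$ if $i=0$ and $\varphi_0(b)<\varepsilon_0(b')$. For $j\ge0$, $b\in B$, $\mu\in P$: $\mathcal P_j(b,\mu)=\{b\otimes b_j\otimes\cdots\otimes b_1\in B^{\otimes(j+1)}:wt(b_j)+\cdots+wt(b_1)=cl(\mu)\}$ and $E(b_{j+1}\otimes\cdots\otimes b_1)=\sum_{i=1}^j iH(b_{i+1}\otimes b_i)$. *)

theory Defs
  imports Main
begin

definition gcm :: "('i \<Rightarrow> 'i \<Rightarrow> int) \<Rightarrow> bool" where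
  "gcm a \<longleftrightarrow> (\<forall>i. a i i = 2) \<and> (\<forall>i j. i \<noteq> j \<longrightarrow> a i j \<le> 0)
     \<and> (\<forall>i j. a i j = 0 \<longleftrightarrow> a j i = 0)"

definition indecomposable :: "('i \<Rightarrow> 'i \<Rightarrow> int) \<Rightarrow> bool" where
  "indecomposable a \<longleftrightarrow>
     (\<forall>S. S \<noteq> {} \<and> S \<noteq> UNIV \<longrightarrow> (\<exists>i\<in>S. \<exists>j. j \<notin> S \<and> a i j \<noteq> 0))"

(* affine type (Kac, Thm 4.3): indecomposable GCM admitting u > 0 with A u = 0 *)
definition affine_cartan :: "('i::finite \<Rightarrow> 'i \<Rightarrow> int) \<Rightarrow> bool" where
  "affine_cartan a \<longleftrightarrow> gcm a \<and> indecomposable a \<and>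
     (\<exists>u::'i \<Rightarrow> int. (\<forall>i. u i > 0) \<and> (\<forall>i. (\<Sum>j\<in>UNIV. a i j * u j) = 0))"

(* special node i0: the canonical central element c = sum a_i^vee h_i has a_{i0}^vee = 1,
   where (a_i^vee) is the positive integer vector with (a_i^vee)^T A = 0 *)
definition special_node :: "('i::finite \<Rightarrow> 'i \<Rightarrow> int) \<Rightarrow> 'i \<Rightarrow> bool" where
  "special_node a i0 \<longleftrightarrow>
     (\<exists>c::'i \<Rightarrow> int. (\<forall>i. c i > 0) \<and> (\<forall>j. (\<Sum>i\<in>UNIV. c i * a i j) = 0) \<and> c i0 = 1)"

(* P_cl = \<oplus> Z Lambda_i is modelled as 'i => int (coefficients of the Lambda_i);
   P = P_cl \<oplus> Z delta is modelled as pairs (Lambda-coefficients, delta-coefficient). *)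
type_synonym 'i wcl = "'i \<Rightarrow> int"
type_synonym 'i wt = "('i \<Rightarrow> int) \<times> int"

definition cl :: "'i wt \<Rightarrow> 'i wcl" where "cl \<mu> = fst \<mu>"

definition alpha :: "('i \<Rightarrow> 'i \<Rightarrow> int) \<Rightarrow> 'i \<Rightarrow> 'i \<Rightarrow> 'i wt" where
  "alpha a i0 i = ((\<lambda>j. a j i), (if i = i0 then 1 else 0))"

definition wadd :: "'i wt \<Rightarrow> 'i wt \<Rightarrow> 'i wt" where
  "wadd \<mu> \<nu> = ((\<lambda>j. fst \<mu> j + fst \<nu> j), snd \<mu> + snd \<nu>)"

definition wsmul :: "int \<Rightarrow> 'i wt \<Rightarrow> 'i wt" where
  "wsmul k \<mu> = ((\<lambda>j. k * fst \<mu> j), k * snd \<mu>)"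

(* iterate a partial operator (None plays the role of 0) *)
fun iter_opt :: "('b \<Rightarrow> 'b option) \<Rightarrow> nat \<Rightarrow> 'b \<Rightarrow> 'b option" where
  "iter_opt g 0 x = Some x"
| "iter_opt g (Suc k) x = Option.bind (g x) (iter_opt g k)"

(* max{k : g^k x \<noteq> 0}; used for both epsilon (g = e_i) and phi (g = f_i) *)
definition depth :: "('b \<Rightarrow> 'b option) \<Rightarrow> 'b \<Rightarrow> nat" where
  "depth g x = (GREATEST k. iter_opt g k x \<noteq> None)"

definition crystal ::
  "('i \<Rightarrow> 'i \<Rightarrow> int) \<Rightarrow> ('b \<Rightarrow> 'i wcl) \<Rightarrow> ('i \<Rightarrow> 'b \<Rightarrow> 'b option)
     \<Rightarrow> ('i \<Rightarrow> 'b \<Rightarrow> 'b option) \<Rightarrow> bool" where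
  "crystal a wt e f \<longleftrightarrow>
     (\<forall>i b b'. f i b = Some b' \<longleftrightarrow> e i b' = Some b) \<and>
     (\<forall>i b b'. e i b = Some b' \<longrightarrow> wt b' = (\<lambda>k. wt b k + a k i)) \<and>
     (\<forall>i b. int (depth (f i) b) = int (depth (e i) b) + wt b i)"

(* e_i on the tensor power B^{\<otimes>(n+1)}; an element b_{n+1} \<otimes> ... \<otimes> b_1 is the list
   [b_{n+1}, ..., b_1], the tensor product being b_{n+1} \<otimes> (b_n \<otimes> (... \<otimes> b_1)). *)
primrec etens :: "('i \<Rightarrow> 'b \<Rightarrow> 'b option) \<Rightarrow> ('i \<Rightarrow> 'b \<Rightarrow> 'b option) \<Rightarrow> nat \<Rightarrow> 'i
     \<Rightarrow> 'b list \<Rightarrow> 'b list option" where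
  "etens e f 0 i xs = (case xs of [x] \<Rightarrow> map_option (\<lambda>y. [y]) (e i x) | _ \<Rightarrow> None)"
| "etens e f (Suc n) i xs = (case xs of
       [] \<Rightarrow> None
     | x # ys \<Rightarrow> if depth (etens e f n i) ys \<le> depth (f i) x
                 then map_option (\<lambda>y. y # ys) (e i x)
                 else map_option (Cons x) (etens e f n i ys))"

definition energy ::
  "('i \<Rightarrow> 'b \<Rightarrow> 'b option) \<Rightarrow> ('i \<Rightarrow> 'b \<Rightarrow> 'b option) \<Rightarrow> 'i \<Rightarrow> ('b \<Rightarrow> 'b \<Rightarrow> int) \<Rightarrow> bool" where
  "energy e f i0 H \<longleftrightarrow>
     (\<forall>i b b' c c'. etens e f 1 i [b, b'] = Some [c, c'] \<longrightarrow>
        H c c' = H b b' + (if i \<noteq> i0 then 0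
                           else if depth (e i0) b' \<le> depth (f i0) b then 1 else -1))"

definition Pset :: "('b \<Rightarrow> 'i wcl) \<Rightarrow> nat \<Rightarrow> 'b \<Rightarrow> 'i wt \<Rightarrow> 'b list set" where
  "Pset wt j b \<mu> = {x # xs | x xs. x = b \<and> length xs = j \<and>
                       (\<lambda>k. \<Sum>y\<leftarrow>xs. wt y k) = cl \<mu>}"

(* E(b_{j+1} \<otimes> ... \<otimes> b_1) = sum_{k=1}^j k H(b_{k+1} \<otimes> b_k); list q = [b_{j+1},...,b_1],
   so b_k = q ! (j + 1 - k) *)
definition Eng :: "('b \<Rightarrow> 'b \<Rightarrow> int) \<Rightarrow> 'b list \<Rightarrow> int" where
  "Eng H q = (let j = length q - 1 in
     (\<Sum>k = 1..j. int k * H (q ! (j - k)) (q ! (j + 1 - k))))"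

end

theory Submission
  imports Defs
begin

text \<open>Each application of \<open>e i\<close> to \<open>p = b\<^sub>j\<^sub>+\<^sub>1 \<otimes> \<dots> \<otimes> b\<^sub>1\<close> changes exactly one
  factor, the one selected by the signature rule.  The selection guarantees that, in the pair
  to its right, \<open>e i\<close> acts on the left factor (so \<open>H\<close> grows by \<open>\<delta>\<^sub>0\<^sub>i\<close>), and in the pair to
  its left on the right factor (so \<open>H\<close> drops by \<open>\<delta>\<^sub>0\<^sub>i\<close>).  As these two pairs carry
  consecutive weights in \<open>E\<close>, a step changes \<open>E\<close> by \<open>-\<delta>\<^sub>0\<^sub>i\<close>, unless it acts on the
  leftmost factor, which has no left neighbour and contributes \<open>j \<delta>\<^sub>0\<^sub>i\<close>.  The leftmost factor
  moves from \<open>f\<^sub>i\<^sup>s b\<close> to \<open>f\<^sub>i\<^sup>t b\<close>, so comparing \<open>i\<close>-weights shows that exactly \<open>s - t\<close>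
  of the \<open>n\<close> steps act on it.\<close>

text \<open>Unless the iteration terminates, \<open>depth\<close> is an unspecified \<open>GREATEST\<close> value.\<close>

definition terminates :: "('b \<Rightarrow> 'b option) \<Rightarrow> 'b \<Rightarrow> bool" where
  "terminates g x \<longleftrightarrow> (\<exists>N. iter_opt g N x = None)"

lemma iter_opt_None_mono:
  assumes "iter_opt g k x = None" and "k \<le> k'"
  shows "iter_opt g k' x = None"
  using assms
proof (induction k arbitrary: x k')
  case (Suc k)
  then obtain k'' where "k' = Suc k''" "k \<le> k''" by (cases k') auto
  with Suc show ?case by (cases "g x") auto
qed simp

lemma iter_opt_ne_None_iff_le_depth:
  assumes "terminates g x"
  shows "iter_opt g k x \<noteq> None \<longleftrightarrow> k \<le> depth g x"
proof -
  let ?P = "\<lambda>k. iter_opt g k x \<noteq> None"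
  obtain N where N: "iter_opt g N x = None" using assms unfolding terminates_def by blast
  have bound: "?P k' \<Longrightarrow> k' \<le> N" for k'
    using iter_opt_None_mono[OF N, of k'] by linarith
  have "?P (depth g x)"
    unfolding depth_def by (rule GreatestI_nat[of ?P 0 N, OF _ bound]) simp
  moreover have "?P k \<Longrightarrow> k \<le> depth g x"
    unfolding depth_def by (rule Greatest_le_nat[of ?P k N, OF _ bound])
  ultimately show ?thesis by (metis iter_opt_None_mono)
qed

lemma depth_unfold:
  assumes "terminates g x"
  shows "depth g x = (case g x of None \<Rightarrow> 0 | Some y \<Rightarrow> Suc (depth g y))"
proof (cases "g x")
  case None
  then show ?thesis
    using iter_opt_ne_None_iff_le_depth[OF assms, of 1] by simp
next
  case (Some y)
  obtain N where "iter_opt g N x = None" using assms unfolding terminates_def by blast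
  with Some have "iter_opt g (N - 1) y = None" by (cases N) auto
  then have "terminates g y" unfolding terminates_def by blast
  have shift: "Suc k \<le> depth g x \<longleftrightarrow> k \<le> depth g y" for k
    using iter_opt_ne_None_iff_le_depth[OF assms, of "Suc k"]
      iter_opt_ne_None_iff_le_depth[OF \<open>terminates g y\<close>, of k] Some by simp
  show ?thesis
    using shift[of "depth g y"] shift[of "Suc (depth g y)"] Some by simp
qed

lemma terminates_by_weight:
  fixes w :: "'b \<Rightarrow> int"
  assumes "finite S" and "x \<in> S"
    and step: "\<And>u v. u \<in> S \<Longrightarrow> g u = Some v \<Longrightarrow> v \<in> S \<and> w u < w v"
  shows "terminates g x"
proof -
  have orbit: "x \<in> S \<Longrightarrow> iter_opt g k x = Some y \<Longrightarrow> y \<in> S \<and> w x + int k \<le> w y" for k x y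
  proof (induction k arbitrary: x)
    case (Suc k)
    then obtain z where "g x = Some z" "iter_opt g k z = Some y" by (cases "g x") auto
    with Suc step show ?case by fastforce
  qed simp
  define N where "N = nat (Max (w ` S) - w x) + 1"
  have "iter_opt g N x = None"
  proof (rule ccontr)
    assume "iter_opt g N x \<noteq> None"
    then obtain y where "y \<in> S" "w x + int N \<le> w y" using orbit[OF \<open>x \<in> S\<close>] by blast
    moreover have "w y \<le> Max (w ` S)" "w x \<le> Max (w ` S)" using assms(1,2) \<open>y \<in> S\<close> by simp_all
    ultimately show False unfolding N_def by linarith
  qed
  then show ?thesis unfolding terminates_def by blast
qed

lemma iter_opt_etens_0:
  "iter_opt (etens e f 0 i) k [x] = map_option (\<lambda>y. [y]) (iter_opt (e i) k x)"
proof (induction k arbitrary: x)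
  case (Suc k)
  then show ?case by (cases "e i x") auto
qed simp

lemma depth_etens_0: "depth (etens e f 0 i) [x] = depth (e i) x"
  unfolding depth_def iter_opt_etens_0 by simp

locale crystal_color =
  fixes a :: "'i \<Rightarrow> 'i \<Rightarrow> int" and wt :: "'b::finite \<Rightarrow> 'i wcl"
    and e f :: "'i \<Rightarrow> 'b \<Rightarrow> 'b option" and i :: 'i
  assumes crystal: "crystal a wt e f" and diag: "a i i = 2"
begin

lemma f_eq_Some_iff: "f i x = Some y \<longleftrightarrow> e i y = Some x"
  using crystal unfolding crystal_def by blast

lemma weight_e: "e i x = Some y \<Longrightarrow> wt y i = wt x i + 2"
  using crystal diag unfolding crystal_def by fastforce

lemma weight_f: "f i x = Some y \<Longrightarrow> wt y i = wt x i - 2"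
  using weight_e f_eq_Some_iff by fastforce

lemma weight_iter_f: "iter_opt (f i) r x = Some y \<Longrightarrow> wt y i = wt x i - 2 * int r"
proof (induction r arbitrary: x)
  case (Suc r)
  then obtain z where "f i x = Some z" "iter_opt (f i) r z = Some y" by (cases "f i x") auto
  with Suc.IH show ?case using weight_f by fastforce
qed simp

lemma terminates_e: "terminates (e i) x"
  by (rule terminates_by_weight[where S = UNIV and w = "\<lambda>u. wt u i"]) (auto simp: weight_e)

lemma terminates_f: "terminates (f i) x"
  by (rule terminates_by_weight[where S = UNIV and w = "\<lambda>u. - wt u i"]) (auto simp: weight_f)

lemma depth_e_None: "e i x = None \<Longrightarrow> depth (e i) x = 0"
  using depth_unfold[OF terminates_e, of x] by simp

lemma depth_e_Some:
  assumes "e i x = Some y"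
  shows "depth (e i) x = Suc (depth (e i) y)" and "depth (f i) y = Suc (depth (f i) x)"
proof -
  have "f i y = Some x" using assms f_eq_Some_iff by blast
  with assms show "depth (e i) x = Suc (depth (e i) y)" "depth (f i) y = Suc (depth (f i) x)"
    using depth_unfold[OF terminates_e, of x] depth_unfold[OF terminates_f, of y] by simp_all
qed

lemma etens_length_weight:
  "length L = Suc n \<Longrightarrow> etens e f n i L = Some L' \<Longrightarrow>
    length L' = Suc n \<and> (\<Sum>y\<leftarrow>L'. wt y i) = (\<Sum>y\<leftarrow>L. wt y i) + 2"
proof (induction n arbitrary: L L')
  case 0
  then obtain x where "L = [x]" by (cases L) auto
  with 0 obtain y where "e i x = Some y" "L' = [y]" by auto
  with \<open>L = [x]\<close> show ?case using weight_e by auto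
next
  case (Suc n)
  then obtain x ys where L: "L = x # ys" "length ys = Suc n" by (cases L) auto
  show ?case
  proof (cases "depth (etens e f n i) ys \<le> depth (f i) x")
    case True
    with Suc.prems L obtain y where "e i x = Some y" "L' = y # ys" by auto
    with L show ?thesis using weight_e by auto
  next
    case False
    with Suc.prems L obtain ys' where "etens e f n i ys = Some ys'" "L' = x # ys'" by auto
    with L Suc.IH show ?thesis by auto
  qed
qed

lemma terminates_etens:
  assumes "length L = Suc n"
  shows "terminates (etens e f n i) L"
proof (rule terminates_by_weight[where S = "{xs. length xs = Suc n}" and w = "\<lambda>xs. \<Sum>y\<leftarrow>xs. wt y i"])
  show "finite {xs :: 'b list. length xs = Suc n}"
    using finite_lists_length_eq[OF finite_UNIV, of "Suc n"] by simp
next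
  fix u v assume "u \<in> {xs. length xs = Suc n}" "etens e f n i u = Some v"
  then show "v \<in> {xs. length xs = Suc n} \<and> (\<Sum>y\<leftarrow>u. wt y i) < (\<Sum>y\<leftarrow>v. wt y i)"
    using etens_length_weight[of u n v] by auto
qed (use assms in simp)

lemma depth_etens_None:
  "length L = Suc n \<Longrightarrow> etens e f n i L = None \<Longrightarrow> depth (etens e f n i) L = 0"
  using depth_unfold[OF terminates_etens] by simp

lemma depth_etens_Some:
  "length L = Suc n \<Longrightarrow> etens e f n i L = Some L' \<Longrightarrow>
    depth (etens e f n i) L = Suc (depth (etens e f n i) L')"
  using depth_unfold[OF terminates_etens] by simp

lemma depth_etens_Cons:
  "length ys = Suc n \<Longrightarrow> int (depth (etens e f (Suc n) i) (x # ys)) =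
    max (int (depth (e i) x))
        (int (depth (e i) x) + int (depth (etens e f n i) ys) - int (depth (f i) x))"
proof (induction "depth (e i) x + depth (etens e f n i) ys" arbitrary: x ys rule: less_induct)
  case less
  have len: "length (x # ys) = Suc (Suc n)" using less.prems by simp
  show ?case
  proof (cases "depth (etens e f n i) ys \<le> depth (f i) x")
    case le: True
    show ?thesis
    proof (cases "e i x")
      case None
      then show ?thesis
        using le depth_e_None depth_etens_None[OF len] by simp
    next
      case (Some y)
      then have "etens e f (Suc n) i (x # ys) = Some (y # ys)" using le by simp
      moreover note depth_e_Some[OF Some]
      moreover have "int (depth (etens e f (Suc n) i) (y # ys)) =
          max (int (depth (e i) y)) (int (depth (e i) y) + int (depth (etens e f n i) ys) - int (depth (f i) y))"
        using less depth_e_Some[OF Some] by simp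
      ultimately show ?thesis using le depth_etens_Some[OF len] by simp
    qed
  next
    case gt: False
    then obtain ys' where ys': "etens e f n i ys = Some ys'"
      using depth_etens_None[OF less.prems] by fastforce
    have len': "length ys' = Suc n" using etens_length_weight[OF less.prems ys'] by simp
    have "etens e f (Suc n) i (x # ys) = Some (x # ys')" using gt ys' by simp
    moreover note depth_etens_Some[OF less.prems ys']
    moreover have "int (depth (etens e f (Suc n) i) (x # ys')) =
        max (int (depth (e i) x)) (int (depth (e i) x) + int (depth (etens e f n i) ys') - int (depth (f i) x))"
      using less.hyps[OF _ len'] depth_etens_Some[OF less.prems ys'] by simp
    ultimately show ?thesis using gt depth_etens_Some[OF len] by simp
  qed
qed

lemma depth_e_hd_le_depth_etens:
  assumes "length L = Suc n"
  shows "depth (e i) (L ! 0) \<le> depth (etens e f n i) L"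
proof (cases n)
  case 0
  with assms obtain x where "L = [x]" by (cases L) auto
  then show ?thesis using 0 depth_etens_0[of e f i x] by simp
next
  case (Suc n')
  with assms obtain x ys where "L = x # ys" "length ys = Suc n'" by (cases L) auto
  then show ?thesis using depth_etens_Cons[of ys n' x] Suc by simp
qed

text \<open>The signature rule; its last conjunct is only needed to carry the induction.\<close>

lemma etens_eq_Some_list_update:
  "length L = Suc n \<Longrightarrow> etens e f n i L = Some L' \<Longrightarrow>
    \<exists>m y. m \<le> n \<and> e i (L ! m) = Some y \<and> L' = L[m := y]
      \<and> (0 < m \<longrightarrow> depth (f i) (L ! (m - 1)) < depth (e i) (L ! m))
      \<and> (m < n \<longrightarrow> depth (e i) (L ! Suc m) \<le> depth (f i) (L ! m))
      \<and> (m = 0 \<longrightarrow> depth (etens e f n i) L = depth (e i) (L ! 0))"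
proof (induction n arbitrary: L L')
  case 0
  then obtain x where x: "L = [x]" by (cases L) auto
  with 0 obtain y where "e i x = Some y" "L' = [y]" by auto
  with x show ?case using depth_etens_0[of e f i x]
    by (intro exI[of _ 0] exI[of _ y]) (simp del: etens.simps)
next
  case (Suc n)
  then obtain x ys where L: "L = x # ys" and len: "length ys = Suc n" by (cases L) auto
  show ?case
  proof (cases "depth (etens e f n i) ys \<le> depth (f i) x")
    case le: True
    with Suc.prems L obtain y where y: "e i x = Some y" "L' = y # ys" by auto
    have "depth (e i) (ys ! 0) \<le> depth (f i) x"
      using le depth_e_hd_le_depth_etens[OF len] by simp
    moreover have "depth (etens e f (Suc n) i) L = depth (e i) x"
      using le depth_etens_Cons[OF len, of x] L by simp
    ultimately show ?thesis using L y by (intro exI[of _ 0] exI[of _ y]) (simp del: etens.simps)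
  next
    case gt: False
    with Suc.prems L obtain ys' where ys': "etens e f n i ys = Some ys'" "L' = x # ys'" by auto
    obtain m y where IH: "m \<le> n" "e i (ys ! m) = Some y" "ys' = ys[m := y]"
      "0 < m \<longrightarrow> depth (f i) (ys ! (m - 1)) < depth (e i) (ys ! m)"
      "m < n \<longrightarrow> depth (e i) (ys ! Suc m) \<le> depth (f i) (ys ! m)"
      "m = 0 \<longrightarrow> depth (etens e f n i) ys = depth (e i) (ys ! 0)"
      using Suc.IH[OF len ys'(1)] by blast
    have "depth (f i) (L ! m) < depth (e i) (L ! Suc m)"
      using IH(4,6) gt L by (cases m) auto
    with L IH ys'(2) show ?thesis by (intro exI[of _ "Suc m"] exI[of _ y]) simp
  qed
qed

end

lemma etens_1:
  "etens e f 1 i [b, b'] =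
    (if depth (e i) b' \<le> depth (f i) b then map_option (\<lambda>y. [y, b']) (e i b)
     else map_option (\<lambda>y. [b, y]) (e i b'))"
  by (simp add: depth_etens_0 option.map_comp comp_def)

lemma energy_e_left:
  assumes "energy e f i0 H" and "depth (e i) b' \<le> depth (f i) b" and "e i b = Some y"
  shows "H y b' = H b b' + (if i = i0 then 1 else 0)"
proof -
  have "etens e f 1 i [b, b'] = Some [y, b']"
    unfolding etens_1 using assms(2,3) by simp
  with assms(1,2) show ?thesis unfolding energy_def by auto
qed

lemma energy_e_right:
  assumes "energy e f i0 H" and "depth (f i) b < depth (e i) b'" and "e i b' = Some y"
  shows "H b y = H b b' + (if i = i0 then -1 else 0)"
proof -
  have "etens e f 1 i [b, b'] = Some [b, y]"
    unfolding etens_1 using assms(2,3) by simp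
  with assms(1,2) show ?thesis unfolding energy_def by auto
qed

lemma Eng_eq_sum:
  assumes "length q = Suc j"
  shows "Eng H q = (\<Sum>p<j. int (j - p) * H (q ! p) (q ! Suc p))"
proof -
  have "Eng H q = (\<Sum>k = 1..j. int k * H (q ! (j - k)) (q ! (j + 1 - k)))"
    unfolding Eng_def using assms by simp
  also have "\<dots> = (\<Sum>p<j. int (j - p) * H (q ! p) (q ! Suc p))"
    by (rule sum.reindex_bij_witness[where i = "\<lambda>p. j - p" and j = "\<lambda>k. j - k"])
      (auto simp: Suc_diff_le)
  finally show ?thesis .
qed

lemma sum_weighted_indicator_diff:
  assumes "m \<le> j"
  shows "(\<Sum>p<j. int (j - p) * (of_bool (p = m) - of_bool (Suc p = m))) =
    (if m = 0 then int j else -1)"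
proof (cases m)
  case 0
  then show ?thesis by (cases j) (simp_all add: sum.delta)
next
  case (Suc m')
  have "(\<Sum>p<j. int (j - p) * (of_bool (p = m) - of_bool (Suc p = m))) =
      (\<Sum>p<j. if p = m then int (j - p) else 0) - (\<Sum>p<j. if p = m' then int (j - p) else 0)"
    unfolding sum_subtractf[symmetric] using Suc by (intro sum.cong) auto
  also have "\<dots> = -1" using Suc assms by (simp add: sum.delta')
  finally show ?thesis using Suc by simp
qed

text \<open>Updating \<open>q ! m\<close> changes \<open>H\<close> only on the pairs \<open>(q ! m, q ! Suc m)\<close> and
  \<open>(q ! (m - 1), q ! m)\<close>, of weights \<open>j - m\<close> and \<open>j - m + 1\<close> in \<open>E\<close>; for \<open>m = 0\<close> the second
  pair is missing.\<close>

lemma Eng_list_update_e: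
  assumes energy: "energy e f i0 H" and len: "length q = Suc j" and "m \<le> j"
    and y: "e i (q ! m) = Some y"
    and left: "0 < m \<longrightarrow> depth (f i) (q ! (m - 1)) < depth (e i) (q ! m)"
    and right: "m < j \<longrightarrow> depth (e i) (q ! Suc m) \<le> depth (f i) (q ! m)"
  shows "Eng H (q[m := y]) = Eng H q + (if i = i0 then (if m = 0 then int j else -1) else 0)"
proof -
  define D where "D p = (of_bool (p = m) - of_bool (Suc p = m) :: int)" for p
  have pair: "H (q[m := y] ! p) (q[m := y] ! Suc p) = H (q ! p) (q ! Suc p) + (if i = i0 then D p else 0)"
    if "p < j" for p
  proof -
    consider "p = m" | "Suc p = m" | "p \<noteq> m" "Suc p \<noteq> m" by blast
    then show ?thesis
    proof cases
      case 1
      then show ?thesis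
        using energy_e_left[OF energy _ y] right len \<open>p < j\<close> by (simp add: D_def)
    next
      case 2
      then show ?thesis
        using energy_e_right[OF energy _ y] left len \<open>p < j\<close> by (auto simp: D_def)
    qed (simp add: D_def)
  qed
  have "Eng H (q[m := y]) = (\<Sum>p<j. int (j - p) * H (q[m := y] ! p) (q[m := y] ! Suc p))"
    using Eng_eq_sum[of "q[m := y]"] len by simp
  also have "\<dots> = (\<Sum>p<j. int (j - p) * H (q ! p) (q ! Suc p))
      + (if i = i0 then (\<Sum>p<j. int (j - p) * D p) else 0)"
    by (simp add: pair sum.distrib distrib_left)
  also have "\<dots> = Eng H q + (if i = i0 then (if m = 0 then int j else -1) else 0)"
    using Eng_eq_sum[OF len] sum_weighted_indicator_diff[OF \<open>m \<le> j\<close>] by (simp add: D_def)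
  finally show ?thesis .
qed

text \<open>\<open>k\<close> counts the steps in which \<open>e i\<close> acts on the leftmost factor.\<close>

lemma (in crystal_color) Eng_iter_etens:
  assumes energy: "energy e f i0 H"
  shows "length p = Suc j \<Longrightarrow> iter_opt (etens e f j i) n p = Some q \<Longrightarrow>
    \<exists>k. wt (q ! 0) i = wt (p ! 0) i + 2 * int k \<and>
        Eng H q = Eng H p + (if i = i0 then int k * (int j + 1) - int n else 0)"
proof (induction n arbitrary: p)
  case (Suc n)
  then obtain p' where p': "etens e f j i p = Some p'" "iter_opt (etens e f j i) n p' = Some q"
    by (cases "etens e f j i p") auto
  obtain m y where m: "m \<le> j" "e i (p ! m) = Some y" "p' = p[m := y]"
      "0 < m \<longrightarrow> depth (f i) (p ! (m - 1)) < depth (e i) (p ! m)"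
      "m < j \<longrightarrow> depth (e i) (p ! Suc m) \<le> depth (f i) (p ! m)"
    using etens_eq_Some_list_update[OF Suc.prems(1) p'(1)] by blast
  have "length p' = Suc j" using m(3) Suc.prems(1) by simp
  then obtain k where k: "wt (q ! 0) i = wt (p' ! 0) i + 2 * int k"
      "Eng H q = Eng H p' + (if i = i0 then int k * (int j + 1) - int n else 0)"
    using Suc.IH p'(2) by blast
  have "Eng H p' = Eng H p + (if i = i0 then (if m = 0 then int j else -1) else 0)"
    using Eng_list_update_e[OF energy Suc.prems(1) m(1,2,4,5)] m(3) by simp
  moreover have "wt (p' ! 0) i = wt (p ! 0) i + (if m = 0 then 2 else 0)"
    using m(2,3) Suc.prems(1) weight_e by (cases m) auto
  ultimately show ?case
    using k by (intro exI[of _ "k + of_bool (m = 0)"]) (auto simp: algebra_simps)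
qed (intro exI[of _ 0], simp)

theorem mainTheorem5:
  fixes a :: "'i::finite \<Rightarrow> 'i \<Rightarrow> int" and i0 :: 'i
    and wt :: "'b::finite \<Rightarrow> 'i wcl"
    and e f :: "'i \<Rightarrow> 'b \<Rightarrow> 'b option"
    and H :: "'b \<Rightarrow> 'b \<Rightarrow> int"
    and b :: 'b and i :: 'i and \<xi> :: "'i wt" and j n s t :: nat and p :: "'b list"
  assumes "affine_cartan a" and "special_node a i0"
    and "crystal a wt e f" and "energy e f i0 H"
    and "t \<le> s" and "s \<le> depth (f i) b"
    and "p \<in> Pset wt j (the (iter_opt (f i) s b)) \<xi>"
    and "iter_opt (etens e f j i) n p \<noteq> None"
    and "the (iter_opt (etens e f j i) n p)
           \<in> Pset wt j (the (iter_opt (f i) t b))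
                (wadd \<xi> (wsmul (int n + int t - int s) (alpha a i0 i)))"
  shows "Eng H (the (iter_opt (etens e f j i) n p))
           = Eng H p + (if i = i0 then (int j + 1) * (int s - int t) - int n else 0)"
proof -
  interpret crystal_color a wt e f i
    using assms(1,3) by unfold_locales (auto simp: affine_cartan_def gcm_def)
  obtain q where q: "iter_opt (etens e f j i) n p = Some q" using assms(8) by blast
  obtain bs where bs: "iter_opt (f i) s b = Some bs"
    using iter_opt_ne_None_iff_le_depth[OF terminates_f] assms(6) by blast
  obtain bt where bt: "iter_opt (f i) t b = Some bt"
    using iter_opt_ne_None_iff_le_depth[OF terminates_f] assms(5,6) by fastforce
  have p: "p ! 0 = bs" "length p = Suc j" and "q ! 0 = bt"
    using assms(7,9) bs bt q unfolding Pset_def by auto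
  then obtain k where k: "wt bt i = wt bs i + 2 * int k"
      "Eng H q = Eng H p + (if i = i0 then int k * (int j + 1) - int n else 0)"
    using Eng_iter_etens[OF assms(4) p(2) q] by auto
  moreover have "wt bs i = wt b i - 2 * int s" "wt bt i = wt b i - 2 * int t"
    using weight_iter_f bs bt by auto
  ultimately have "int k = int s - int t" by simp
  with k(2) q show ?thesis by (simp add: mult.commute)
qed

end
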